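(* Let $M\ge1$ and $\chi,\tilde\chi\in\widetilde{\mathcal W}^-\cup\mathcal W^+_M$ with $\tilde\chi\le\chi$, and let $Q=Q_{\chi,\tilde\chi}$. Then the function $h(t)=\dfrac{Q(t)^2}{t}$ is non-increasing on $\mathbb R_{>0}$.
   Context: $\widetilde{\mathcal W}^-$: convex non-decreasing $\chi:\mathbb R_{\le0}\to\mathbb R_{\le0}$, $\chi(0)=0$, $\chi\not\equiv0$. $\mathcal W^+_M$: increasing concave $\chi:\mathbb R_{\le0}\to\mathbb R_{\le0}$, $\chi(0)=0$, $\chi<0$ on $(-\infty,0)$, $|t\chi'(t)|\le M|\chi(t)|$ for $t\le0$. For $\epsilon>0$, $Q_0(\epsilon)=\sup_{t\le-1}\chi(\epsilon t)/\tilde\chi(t)$; $Q(t)=1$ for $t\ge1$; for $0<t<1$, $Q(t)=(Q_0(t)/Q_0(1))^{1/2}$ if $\chi\in\widetilde{\mathcal W}^-$ and $Q(t)=t^{1/2}$ if $\chi\in\mathcal W^+_M$; $Q(0)=\lim_{s\to0^+}Q(s)$. *)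

theory Defs
  imports "HOL-Analysis.Analysis"
begin

text \<open>Functions on the non-positive reals are modelled as total functions
  real \<Rightarrow> real; only their values on {..0} matter.\<close>

definition Wminus :: "(real \<Rightarrow> real) \<Rightarrow> bool" where
  "Wminus chi \<longleftrightarrow> convex_on {..0} chi \<and> mono_on {..0} chi \<and> chi 0 = 0
     \<and> (\<forall>t\<le>0. chi t \<le> 0) \<and> (\<exists>t\<le>0. chi t \<noteq> 0)"

definition Wplus :: "real \<Rightarrow> (real \<Rightarrow> real) \<Rightarrow> bool" where
  "Wplus M chi \<longleftrightarrow> strict_mono_on {..0} chi \<and> concave_on {..0} chi \<and> chi 0 = 0
     \<and> (\<forall>t\<le>0. chi t \<le> 0) \<and> (\<forall>t<0. chi t < 0)
     \<and> (\<forall>t<0. chi differentiable (at t) \<and> \<bar>t * deriv chi t\<bar> \<le> M * \<bar>chi t\<bar>)"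

definition Q0 :: "(real \<Rightarrow> real) \<Rightarrow> (real \<Rightarrow> real) \<Rightarrow> real \<Rightarrow> real" where
  "Q0 chi chit eps = (SUP t\<in>{..-1}. chi (eps * t) / chit t)"

definition Qpos :: "(real \<Rightarrow> real) \<Rightarrow> (real \<Rightarrow> real) \<Rightarrow> real \<Rightarrow> real" where
  "Qpos chi chit t = (if 1 \<le> t then 1
      else if Wminus chi then sqrt (Q0 chi chit t / Q0 chi chit 1) else sqrt t)"

definition Q :: "(real \<Rightarrow> real) \<Rightarrow> (real \<Rightarrow> real) \<Rightarrow> real \<Rightarrow> real" where
  "Q chi chit t = (if 0 < t then Qpos chi chit t
      else if t = 0 then Lim (at_right 0) (Qpos chi chit) else undefined)"

end

theory Submission
  imports Defs
begin

text \<open>On [1,\<infinity>) the function is 1/t. On (0,1] it is identically 1 when chi is concave, and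
  (Q0(t)/t)/Q0(1) when chi is convex. In the convex case, convexity and chi(0) = 0 give
  chi(a s)/a \<le> chi(b s)/b for 0 < a \<le> b and s \<le> 0, so every ratio in the supremum defining
  Q0(t)/t, and hence Q0(t)/t itself, is non-increasing in t. The ratios lie in (0,1] because
  chit \<le> chi and chi is monotone, so Q0 is finite and positive. Both pieces equal 1 at t = 1.\<close>

abbreviation Wclass :: "real \<Rightarrow> (real \<Rightarrow> real) \<Rightarrow> bool" where
  "Wclass M chi \<equiv> Wminus chi \<or> Wplus M chi"

lemma antimono_on_Un:
  fixes f :: "'a::linorder \<Rightarrow> 'b::order"
  assumes "antimono_on A f" "antimono_on B f" "c \<in> A" "c \<in> B"
    and "\<forall>x\<in>A. x \<le> c" "\<forall>x\<in>B. c \<le> x"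
  shows "antimono_on (A \<union> B) f"
proof (rule monotone_onI)
  fix r s assume r: "r \<in> A \<union> B" and s: "s \<in> A \<union> B" and "r \<le> s"
  show "f s \<le> f r"
  proof (cases "r \<in> A \<and> s \<in> B")
    case True
    then have "f s \<le> f c" "f c \<le> f r"
      using assms by (auto dest: monotone_onD)
    then show ?thesis by (rule order_trans)
  next
    case False
    have "(r \<in> A \<and> s \<in> A) \<or> (r \<in> B \<and> s \<in> B)"
    proof (cases "r \<in> B")
      case True
      with assms(5,6) \<open>r \<le> s\<close> have "s \<in> A \<Longrightarrow> s = c"
        by (meson antisym order_trans)
      with True s \<open>c \<in> B\<close> show ?thesis by auto
    qed (use False r s in auto)
    then show ?thesis
      using assms(1,2) \<open>r \<le> s\<close> by (auto dest: monotone_onD)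
  qed
qed

lemma convex_on_scaleR_le:
  fixes f :: "'a::real_vector \<Rightarrow> real"
  assumes "convex_on S f" "0 \<in> S" "x \<in> S" "f 0 = 0" "0 \<le> l" "l \<le> 1"
  shows "f (l *\<^sub>R x) \<le> l * f x"
  using convex_onD[OF assms(1), of l 0 x] assms by simp

lemma Wminus_neg:
  assumes "Wminus chi" "t < 0"
  shows "chi t < 0"
proof -
  have cv: "convex_on {..0} chi" and mo: "mono_on {..0} chi" and z: "chi 0 = 0"
    using assms(1) unfolding Wminus_def by auto
  obtain t0 where "t0 \<le> 0" "chi t0 < 0"
    using assms(1) unfolding Wminus_def by force
  with z have "t0 < 0" by (cases "t0 = 0") auto
  show ?thesis
  proof (cases "t \<le> t0")
    case True
    then show ?thesis
      using mono_onD[OF mo, of t t0] \<open>t0 < 0\<close> \<open>chi t0 < 0\<close> by simp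
  next
    case False
    define l where "l = t / t0"
    have "0 < l" "l \<le> 1"
      using False \<open>t0 < 0\<close> assms(2) by (auto simp: l_def divide_simps)
    have "chi t = chi (l *\<^sub>R t0)"
      using \<open>t0 < 0\<close> by (simp add: l_def)
    also have "\<dots> \<le> l * chi t0"
      using convex_on_scaleR_le[OF cv _ _ z] \<open>0 < l\<close> \<open>l \<le> 1\<close> \<open>t0 < 0\<close> by simp
    also have "\<dots> < 0"
      using \<open>0 < l\<close> \<open>chi t0 < 0\<close> by (simp add: mult_pos_neg)
    finally show ?thesis .
  qed
qed

lemma Wclass_neg:
  assumes "Wclass M chi" "t < 0"
  shows "chi t < 0"
  using assms Wminus_neg unfolding Wplus_def by blast

lemma Wclass_mono:
  assumes "Wclass M chi"
  shows "mono_on {..0} chi"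
  using assms strict_mono_on_imp_mono_on unfolding Wminus_def Wplus_def by blast

lemma Q_sq_not_Wminus:
  assumes "\<not> Wminus chi" "0 < t" "t \<le> 1"
  shows "(Q chi chit t)\<^sup>2 = t"
  using assms unfolding Q_def Qpos_def by auto

context
  fixes M :: real and chi chit :: "real \<Rightarrow> real"
  assumes chi: "Wclass M chi" and chit: "Wclass M chit"
    and chit_le_chi: "\<forall>t\<le>0. chit t \<le> chi t"
begin

lemma Q0_ratio_pos:
  assumes "0 < e" "t \<le> -1"
  shows "0 < chi (e * t) / chit t"
  using Wclass_neg[OF chi, of "e * t"] Wclass_neg[OF chit, of t] assms
  by (simp add: mult_pos_neg divide_neg_neg)

lemma Q0_ratio_le_1:
  assumes "0 < e" "e \<le> 1" "t \<le> -1"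
  shows "chi (e * t) / chit t \<le> 1"
proof -
  have "t \<le> e * t" "e * t \<le> 0"
    using assms by (auto simp: mult_le_cancel_right1 mult_pos_neg less_imp_le)
  then have "chit t \<le> chi (e * t)"
    using chit_le_chi mono_onD[OF Wclass_mono[OF chi], of t "e * t"] assms(3)
    by (meson atMost_iff dual_order.trans)
  then show ?thesis
    using Wclass_neg[OF chit, of t] assms(3) by (simp add: divide_simps)
qed

lemma Q0_upper:
  assumes "0 < e" "e \<le> 1" "t \<le> -1"
  shows "chi (e * t) / chit t \<le> Q0 chi chit e"
  unfolding Q0_def
proof (rule cSUP_upper)
  show "bdd_above ((\<lambda>t. chi (e * t) / chit t) ` {..-1})"
    using Q0_ratio_le_1 assms(1,2) by (intro bdd_aboveI[where M = 1]) auto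
qed (use assms(3) in simp)

lemma Q0_pos:
  assumes "0 < e" "e \<le> 1"
  shows "0 < Q0 chi chit e"
  using Q0_ratio_pos[OF assms(1), of "-1"] Q0_upper[OF assms, of "-1"] by simp

lemma Q0_div_antimono:
  assumes "Wminus chi"
  shows "antimono_on {0<..1} (\<lambda>e. Q0 chi chit e / e)"
proof (rule monotone_onI)
  fix a b :: real assume a: "a \<in> {0<..1}" and b: "b \<in> {0<..1}" and "a \<le> b"
  have cv: "convex_on {..0} chi" and z: "chi 0 = 0"
    using assms unfolding Wminus_def by auto
  have "Q0 chi chit b \<le> b / a * Q0 chi chit a"
    unfolding Q0_def[of chi chit b]
  proof (rule cSUP_least)
    fix t assume "t \<in> {..-1::real}"
    then have t: "t \<le> -1" by simp
    have "chi (a * t) = chi ((a / b) *\<^sub>R (b * t))"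
      using b by simp
    also have "\<dots> \<le> a / b * chi (b * t)"
      by (rule convex_on_scaleR_le[OF cv _ _ z])
         (use a b t \<open>a \<le> b\<close> in \<open>auto simp: mult_nonneg_nonpos\<close>)
    finally have "b / a * chi (a * t) \<le> chi (b * t)"
      using a b by (simp add: field_simps)
    then have "chi (b * t) / chit t \<le> b / a * chi (a * t) / chit t"
      using Wclass_neg[OF chit, of t] t by (intro divide_right_mono_neg) auto
    also have "\<dots> = b / a * (chi (a * t) / chit t)"
      by simp
    also have "\<dots> \<le> b / a * Q0 chi chit a"
      using Q0_upper[of a t] a b t by (intro mult_left_mono) auto
    finally show "chi (b * t) / chit t \<le> b / a * Q0 chi chit a" .
  qed simp
  then show "Q0 chi chit b / b \<le> Q0 chi chit a / a"
    using a b by (simp add: field_simps)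
qed

lemma Q_sq_Wminus:
  assumes "Wminus chi" "0 < t" "t \<le> 1"
  shows "(Q chi chit t)\<^sup>2 = Q0 chi chit t / Q0 chi chit 1"
  using Q0_pos[of t] Q0_pos[of 1] assms unfolding Q_def Qpos_def by auto

lemma Q_sq_div_antimono_le_1:
  "antimono_on {0<..1} (\<lambda>t. (Q chi chit t)\<^sup>2 / t)"
proof (cases "Wminus chi")
  case True
  show ?thesis
  proof (rule monotone_onI)
    fix r s :: real assume r: "r \<in> {0<..1}" and s: "s \<in> {0<..1}" and "r \<le> s"
    have "Q0 chi chit s / s / Q0 chi chit 1 \<le> Q0 chi chit r / r / Q0 chi chit 1"
      using monotone_onD[OF Q0_div_antimono[OF True] r s \<open>r \<le> s\<close>] Q0_pos[of 1]
      by (intro divide_right_mono) simp_all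
    then show "(Q chi chit s)\<^sup>2 / s \<le> (Q chi chit r)\<^sup>2 / r"
      using r s by (simp add: Q_sq_Wminus[OF True] ac_simps)
  qed
next
  case False
  then show ?thesis
    by (auto intro!: monotone_onI simp: Q_sq_not_Wminus)
qed

end

lemma Q_sq_div_antimono_ge_1:
  "antimono_on {1..} (\<lambda>t. (Q chi chit t)\<^sup>2 / t)"
  by (auto intro!: monotone_onI frac_le simp: Q_def Qpos_def)

theorem lemma3p6:
  fixes M :: real and chi chit :: "real \<Rightarrow> real"
  assumes "M \<ge> 1"
    and "Wminus chi \<or> Wplus M chi"
    and "Wminus chit \<or> Wplus M chit"
    and "\<forall>t\<le>0. chit t \<le> chi t"
  shows "antimono_on {0<..} (\<lambda>t. (Q chi chit t)^2 / t)"
proof -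
  have "antimono_on ({0<..1} \<union> {1..}) (\<lambda>t. (Q chi chit t)^2 / t)"
    using Q_sq_div_antimono_le_1[OF assms(2-4)] Q_sq_div_antimono_ge_1
    by (rule antimono_on_Un) auto
  moreover have "{0<..1} \<union> {1..} = {0::real<..}"
    by auto
  ultimately show ?thesis
    by simp
qed

end
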